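(* Let $c\ge2$, $k\ge c$, $s\ge1$ be integers and let $\lambda_1$ be the smallest normalized Laplacian eigenvalue of $\Gamma^c(s,k)$. Then the strong coloring number satisfies $\chi(\Gamma^c(s,k))=k=\dfrac{c-\lambda_1}{1-\lambda_1}$.
   Context: For integers $k\ge c\ge2$ and $s\ge1$, $\Gamma^c(s,k)$ is the unoriented hypergraph whose vertex set is the disjoint union of $k$ sets $V_1,\dots,V_k$ each of size $s$, and whose edges are exactly all subsets $e$ with $|e|=c$ and $|e\cap V_i|\le1$ for every $i$. For an unoriented hypergraph with every vertex of degree $\deg v=|\{e: v\in e\}|\ge1$, the adjacency matrix has $A_{v,v}=0$ and $A_{v,w}=-|\{e: v,w\in e\}|$ for $v\ne w$; the normalized Laplacian is $L=\mathrm{Id}-D^{-1}A$, $D=\mathrm{diag}(\deg v)$, with eigenvalues $\lambda_1\le\dots\le\lambda_N$. A proper strong $k$-coloring is a map $V\to\{1,\dots,k\}$ such that any two distinct vertices in a common edge receive different colors; $\chi$ is the least such $k$. *)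

theory Defs
  imports Complex_Main
begin

definition hdeg :: "'a set set \<Rightarrow> 'a \<Rightarrow> nat" where
  "hdeg E v = card {e \<in> E. v \<in> e}"

definition hadj :: "'a set set \<Rightarrow> 'a \<Rightarrow> 'a \<Rightarrow> real" where
  "hadj E v w = (if v = w then 0 else - real (card {e \<in> E. v \<in> e \<and> w \<in> e}))"

definition norm_lap :: "'a set set \<Rightarrow> 'a \<Rightarrow> 'a \<Rightarrow> real" where
  "norm_lap E v w = (if v = w then 1 else 0) - hadj E v w / real (hdeg E v)"

text \<open>Eigenvalues of the matrix norm_lap indexed by V (they are all real, as L is
similar to a symmetric matrix).\<close>
definition lap_eigenvalue :: "'a set \<Rightarrow> 'a set set \<Rightarrow> real \<Rightarrow> bool" where
  "lap_eigenvalue V E mu \<longleftrightarrow>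
     (\<exists>f :: 'a \<Rightarrow> real. (\<exists>v\<in>V. f v \<noteq> 0) \<and>
        (\<forall>v\<in>V. (\<Sum>w\<in>V. norm_lap E v w * f w) = mu * f v))"

definition smallest_lap_eigenvalue :: "'a set \<Rightarrow> 'a set set \<Rightarrow> real" where
  "smallest_lap_eigenvalue V E = Min {mu. lap_eigenvalue V E mu}"

definition strong_coloring :: "'a set \<Rightarrow> 'a set set \<Rightarrow> nat \<Rightarrow> ('a \<Rightarrow> nat) \<Rightarrow> bool" where
  "strong_coloring V E k col \<longleftrightarrow>
     (\<forall>v\<in>V. col v \<in> {1..k}) \<and>
     (\<forall>e\<in>E. \<forall>v\<in>e. \<forall>w\<in>e. v \<noteq> w \<longrightarrow> col v \<noteq> col w)"

definition strong_chromatic :: "'a set \<Rightarrow> 'a set set \<Rightarrow> nat" where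
  "strong_chromatic V E = (LEAST k. \<exists>col. strong_coloring V E k col)"

text \<open>The hypergraph Gamma^c(s,k): vertices (i,a) with i<k, a<s, so V_i = {i} x {0..<s};
edges: c-subsets meeting each V_i in at most one vertex.\<close>
definition Gamma_V :: "nat \<Rightarrow> nat \<Rightarrow> (nat \<times> nat) set" where
  "Gamma_V s k = {0..<k} \<times> {0..<s}"

definition Gamma_E :: "nat \<Rightarrow> nat \<Rightarrow> nat \<Rightarrow> (nat \<times> nat) set set" where
  "Gamma_E c s k = {e. e \<subseteq> Gamma_V s k \<and> card e = c \<and>
      (\<forall>i<k. card (e \<inter> ({i} \<times> {0..<s})) \<le> 1)}"

end

theory Submission
  imports Defs "HOL-Combinatorics.Transposition"
begin

(* Two vertices of the same class V\<^sub>i lie in no common edge, and the automorphisms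
permuting classes and vertices within classes show that all pairs from different classes have
the same codegree t. Counting the edges through v together with a second vertex gives
t (k - 1) s = (c - 1) deg v, so L = Id + \<alpha> (J - B) with \<alpha> = (c - 1) / ((k - 1) s), where J is
the all-ones matrix and B the block matrix of the classes. Its eigenvalues are 1 (class sums
zero), 1 - (c - 1) / (k - 1) (constant on classes, total sum zero) and c (constants). The vertices
(i, 0) pairwise share an edge and colouring by class index is proper, so \<chi> = k, and
(c - \<lambda>\<^sub>1) / (1 - \<lambda>\<^sub>1) = k is arithmetic. *)

definition hcodeg :: "'a set set \<Rightarrow> 'a \<Rightarrow> 'a \<Rightarrow> nat" where
  "hcodeg E v w = card {e \<in> E. v \<in> e \<and> w \<in> e}"

lemma hcodeg_involution:
  assumes inv: "\<And>x. \<sigma> (\<sigma> x) = x" and closed: "\<And>e. e \<in> E \<Longrightarrow> \<sigma> ` e \<in> E"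
  shows "hcodeg E (\<sigma> v) (\<sigma> w) = hcodeg E v w"
proof -
  have image_image_id: "\<sigma> ` \<sigma> ` e = e" for e
    using inv by (simp add: image_comp comp_def)
  have "{e \<in> E. \<sigma> v \<in> e \<and> \<sigma> w \<in> e} = image \<sigma> ` {e \<in> E. v \<in> e \<and> w \<in> e}"
  proof (intro equalityI subsetI)
    fix e assume "e \<in> {e \<in> E. \<sigma> v \<in> e \<and> \<sigma> w \<in> e}"
    then have "\<sigma> ` e \<in> {e \<in> E. v \<in> e \<and> w \<in> e}"
      using closed by (force simp: inv intro: image_eqI[where x = "\<sigma> _"])
    then show "e \<in> image \<sigma> ` {e \<in> E. v \<in> e \<and> w \<in> e}"
      by (metis image_image_id image_eqI)
  qed (use closed in auto)
  moreover have "inj_on (image \<sigma>) X" for X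
    by (metis inv injI inj_on_image inj_on_subset subset_UNIV)
  ultimately show ?thesis
    by (simp add: hcodeg_def card_image)
qed

lemma sum_hcodeg_uniform:
  assumes "finite V" and edges: "\<And>e. e \<in> E \<Longrightarrow> e \<subseteq> V \<and> card e = c" and "v \<in> V"
  shows "(\<Sum>w\<in>V - {v}. hcodeg E v w) = (c - 1) * hdeg E v"
proof -
  let ?Ev = "{e \<in> E. v \<in> e}"
  have count: "card {x \<in> A. P x} = (\<Sum>x\<in>A. if P x then 1 else 0)" if "finite A" for A P
    using that by (simp flip: sum.inter_filter)
  have "finite E"
    using edges finite_subset[of E "Pow V"] \<open>finite V\<close> by blast
  then have "finite ?Ev" by simp
  have "hcodeg E v w = (\<Sum>e\<in>?Ev. if w \<in> e then 1 else 0)" for w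
  proof -
    have "{e \<in> E. v \<in> e \<and> w \<in> e} = {e \<in> ?Ev. w \<in> e}" by auto
    then show ?thesis
      unfolding hcodeg_def using count[OF \<open>finite ?Ev\<close>] by presburger
  qed
  then have "(\<Sum>w\<in>V - {v}. hcodeg E v w) = (\<Sum>w\<in>V - {v}. \<Sum>e\<in>?Ev. if w \<in> e then 1 else 0)"
    by simp
  also have "\<dots> = (\<Sum>e\<in>?Ev. \<Sum>w\<in>V - {v}. if w \<in> e then 1 else 0)"
    by (rule sum.swap)
  also have "\<dots> = (\<Sum>e\<in>?Ev. card (e - {v}))"
  proof (rule sum.cong[OF refl])
    fix e assume "e \<in> ?Ev"
    then have "{w \<in> V - {v}. w \<in> e} = e - {v}" using edges by auto
    then show "(\<Sum>w\<in>V - {v}. if w \<in> e then 1 else 0) = card (e - {v})"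
      using count[of "V - {v}" "\<lambda>w. w \<in> e"] \<open>finite V\<close> by simp
  qed
  also have "\<dots> = (\<Sum>e\<in>?Ev. c - 1)"
    using edges \<open>finite V\<close> by (intro sum.cong) (auto intro: finite_subset)
  finally show ?thesis
    by (simp add: hdeg_def mult.commute)
qed

lemma Gamma_E_iff:
  "e \<in> Gamma_E c s k \<longleftrightarrow> e \<subseteq> Gamma_V s k \<and> card e = c \<and> inj_on fst e"
proof -
  have "(\<forall>i<k. card (e \<inter> ({i} \<times> {0..<s})) \<le> 1) \<longleftrightarrow> inj_on fst e"
    if eV: "e \<subseteq> Gamma_V s k"
  proof -
    have fin: "finite (e \<inter> ({i} \<times> {0..<s}))" for i by simp
    have "x = y" if "x \<in> e" "y \<in> e" "fst x = fst y"
      and le1: "\<forall>i<k. card (e \<inter> ({i} \<times> {0..<s})) \<le> 1" for x y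
    proof -
      have "x \<in> e \<inter> ({fst x} \<times> {0..<s})" "y \<in> e \<inter> ({fst x} \<times> {0..<s})" "fst x < k"
        using that(1-3) eV by (auto simp: Gamma_V_def mem_Times_iff)
      then show ?thesis
        using le1 card_le_Suc0_iff_eq[OF fin] by (metis One_nat_def)
    qed
    moreover have "card (e \<inter> ({i} \<times> {0..<s})) \<le> 1" if "inj_on fst e" for i
    proof -
      have "\<forall>x\<in>e \<inter> ({i} \<times> {0..<s}). \<forall>y\<in>e \<inter> ({i} \<times> {0..<s}). x = y"
        using that by (auto dest: inj_onD[where x = "(i, _)" and y = "(i, _)"])
      then show ?thesis
        using card_le_Suc0_iff_eq[OF fin] by simp
    qed
    ultimately show ?thesis by (auto intro: inj_onI)
  qed
  then show ?thesis
    unfolding Gamma_E_def by auto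
qed

lemma Gamma_E_same_class:
  assumes "e \<in> Gamma_E c s k" "v \<in> e" "w \<in> e" "fst v = fst w"
  shows "v = w"
  using assms by (auto simp: Gamma_E_iff inj_on_def)

lemma hcodeg_Gamma_same_class:
  assumes "v \<noteq> w" "fst v = fst w"
  shows "hcodeg (Gamma_E c s k) v w = 0"
proof -
  have "{e \<in> Gamma_E c s k. v \<in> e \<and> w \<in> e} = {}"
    using assms Gamma_E_same_class by blast
  then show ?thesis
    unfolding hcodeg_def by (metis card.empty)
qed

lemma Gamma_E_edge_through:
  assumes "c \<ge> 2" "k \<ge> c" "v \<in> Gamma_V s k" "w \<in> Gamma_V s k" "fst v \<noteq> fst w"
  shows "\<exists>e\<in>Gamma_E c s k. v \<in> e \<and> w \<in> e"
proof -
  have "card ({0..<k} - {fst v, fst w}) = k - 2"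
    using assms by (subst card_Diff_subset) (auto simp: Gamma_V_def)
  then obtain J where J: "J \<subseteq> {0..<k} - {fst v, fst w}" "card J = c - 2"
    using obtain_subset_with_card_n[of "c - 2"] assms by (metis diff_le_mono)
  have "finite J" using J(1) finite_subset by blast
  define e where "e = insert v (insert w ((\<lambda>i. (i, 0)) ` J))"
  have "0 < s" using assms(3) by (auto simp: Gamma_V_def)
  then have "e \<subseteq> Gamma_V s k"
    using J(1) assms(3,4) by (auto simp: e_def Gamma_V_def)
  moreover have "inj_on fst e"
    using J(1) assms(5) by (auto simp: e_def inj_on_def)
  moreover have "card e = c"
  proof -
    have "card ((\<lambda>i. (i, 0::nat)) ` J) = c - 2"
      using J(2) by (simp add: card_image inj_on_def)
    moreover have "v \<notin> (\<lambda>i. (i, 0)) ` J" "w \<notin> (\<lambda>i. (i, 0)) ` J" "v \<noteq> w"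
      using J(1) assms(5) by auto
    ultimately show ?thesis
      using \<open>finite J\<close> assms(1) by (simp add: e_def)
  qed
  ultimately have "e \<in> Gamma_E c s k"
    by (simp add: Gamma_E_iff)
  then show ?thesis
    unfolding e_def by blast
qed

definition class_swap :: "nat \<Rightarrow> nat \<Rightarrow> nat \<Rightarrow> nat \<Rightarrow> nat \<times> nat \<Rightarrow> nat \<times> nat" where
  "class_swap i j a b p =
     (transpose i j (fst p), if fst p \<in> {i, j} then transpose a b (snd p) else snd p)"

lemma class_swap_class_swap [simp]: "class_swap i j a b (class_swap i j a b p) = p"
  by (cases p) (auto simp: class_swap_def transpose_def)

lemma class_swap_Gamma_E:
  assumes "i < k" "j < k" "a < s" "b < s" "e \<in> Gamma_E c s k"
  shows "class_swap i j a b ` e \<in> Gamma_E c s k"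
proof -
  let ?\<sigma> = "class_swap i j a b"
  have "inj ?\<sigma>"
    by (metis class_swap_class_swap injI)
  have "?\<sigma> ` e \<subseteq> Gamma_V s k"
    using assms by (auto simp: Gamma_E_iff Gamma_V_def class_swap_def transpose_def)
  moreover have "card (?\<sigma> ` e) = c"
    using assms(5) \<open>inj ?\<sigma>\<close> by (simp add: Gamma_E_iff card_image inj_on_subset)
  moreover have "inj_on fst (?\<sigma> ` e)"
  proof (rule inj_on_imageI)
    have "fst \<circ> ?\<sigma> = transpose i j \<circ> fst"
      by (auto simp: class_swap_def)
    then show "inj_on (fst \<circ> ?\<sigma>) e"
      using assms(5) by (simp add: Gamma_E_iff comp_inj_on)
  qed
  ultimately show ?thesis
    by (simp add: Gamma_E_iff)
qed

lemma hcodeg_Gamma_other_class: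
  assumes "v \<in> Gamma_V s k" "w \<in> Gamma_V s k" "w' \<in> Gamma_V s k"
    and "fst w \<noteq> fst v" "fst w' \<noteq> fst v"
  shows "hcodeg (Gamma_E c s k) v w' = hcodeg (Gamma_E c s k) v w"
proof -
  let ?\<sigma> = "class_swap (fst w) (fst w') (snd w) (snd w')"
  have "?\<sigma> v = v" "?\<sigma> w = w'"
    using assms(4,5) by (auto simp: class_swap_def)
  moreover have "hcodeg (Gamma_E c s k) (?\<sigma> v) (?\<sigma> w) = hcodeg (Gamma_E c s k) v w"
    using assms(2,3) by (intro hcodeg_involution class_swap_class_swap class_swap_Gamma_E)
      (auto simp: Gamma_V_def mem_Times_iff)
  ultimately show ?thesis
    by simp
qed

lemma hcodeg_div_hdeg_Gamma:
  assumes "c \<ge> 2" "k \<ge> c" "v \<in> Gamma_V s k" "w \<in> Gamma_V s k" "fst w \<noteq> fst v"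
  shows "real (hcodeg (Gamma_E c s k) v w) / real (hdeg (Gamma_E c s k) v)
         = (real c - 1) / ((real k - 1) * real s)"
proof -
  let ?V = "Gamma_V s k" and ?E = "Gamma_E c s k"
  define t where "t = hcodeg ?E v w"
  have "(\<Sum>w'\<in>?V - {v}. hcodeg ?E v w') = (\<Sum>w'\<in>?V - {v}. if fst w' \<noteq> fst v then t else 0)"
  proof (rule sum.cong[OF refl])
    fix w' assume w': "w' \<in> ?V - {v}"
    show "hcodeg ?E v w' = (if fst w' \<noteq> fst v then t else 0)"
      using w' assms(3-5) hcodeg_Gamma_other_class[of v s k w w' c] hcodeg_Gamma_same_class[of v w' c s k]
      by (auto simp: t_def)
  qed
  also have "\<dots> = t * card (({0..<k} - {fst v}) \<times> {0..<s})"
  proof -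
    have "{w' \<in> ?V - {v}. fst w' \<noteq> fst v} = ({0..<k} - {fst v}) \<times> {0..<s}"
      by (auto simp: Gamma_V_def)
    then show ?thesis
      by (simp add: sum.inter_filter[symmetric] Gamma_V_def)
  qed
  also have "\<dots> = t * ((k - 1) * s)"
    using assms(3) by (auto simp: card_cartesian_product Gamma_V_def)
  finally have count: "t * ((k - 1) * s) = (c - 1) * hdeg ?E v"
    using sum_hcodeg_uniform[of ?V ?E c v] assms(3) by (simp add: Gamma_E_iff Gamma_V_def)
  obtain e where "e \<in> ?E" "v \<in> e" "w \<in> e"
    using Gamma_E_edge_through assms by metis
  then have "t > 0"
    using finite_subset[of "{e \<in> ?E. v \<in> e \<and> w \<in> e}" "Pow ?V"]
    by (auto simp: t_def hcodeg_def card_gt_0_iff Gamma_E_iff Gamma_V_def)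
  have "s > 0" "k > 1"
    using assms(1-3) by (auto simp: Gamma_V_def)
  then have "hdeg ?E v > 0"
    using count \<open>t > 0\<close> by (metis mult_is_0 neq0_conv zero_less_diff)
  have "real t * ((real k - 1) * real s) = (real c - 1) * real (hdeg ?E v)"
    using arg_cong[OF count, of real] assms(1,2) by (simp add: of_nat_diff)
  then show ?thesis
    using \<open>hdeg ?E v > 0\<close> \<open>s > 0\<close> \<open>k > 1\<close> by (simp add: t_def field_simps)
qed

lemma norm_lap_Gamma:
  assumes "c \<ge> 2" "k \<ge> c" "v \<in> Gamma_V s k" "w \<in> Gamma_V s k"
  shows "norm_lap (Gamma_E c s k) v w =
    (if w = v then 1 else if fst w = fst v then 0 else (real c - 1) / ((real k - 1) * real s))"
  using hcodeg_Gamma_same_class[of v w] hcodeg_div_hdeg_Gamma[OF assms]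
  by (auto simp: norm_lap_def hadj_def hcodeg_def[symmetric])

lemma norm_lap_Gamma_apply:
  assumes "c \<ge> 2" "k \<ge> c" "i < k" "a < s"
  shows "(\<Sum>w\<in>Gamma_V s k. norm_lap (Gamma_E c s k) (i, a) w * f w) =
    f (i, a) + (real c - 1) / ((real k - 1) * real s) *
      ((\<Sum>j<k. \<Sum>b<s. f (j, b)) - (\<Sum>b<s. f (i, b)))"
proof -
  let ?V = "Gamma_V s k" and ?\<alpha> = "(real c - 1) / ((real k - 1) * real s)"
  have v: "(i, a) \<in> ?V"
    using assms by (simp add: Gamma_V_def)
  have "(\<Sum>w\<in>?V. norm_lap (Gamma_E c s k) (i, a) w * f w) =
        (\<Sum>w\<in>?V. (if w = (i, a) then f w else 0) + ?\<alpha> * (if fst w \<noteq> i then f w else 0))"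
    using assms(1,2) v by (intro sum.cong) (auto simp: norm_lap_Gamma)
  also have "\<dots> = (\<Sum>w\<in>?V. if w = (i, a) then f w else 0)
                    + ?\<alpha> * (\<Sum>w\<in>?V. if fst w \<noteq> i then f w else 0)"
    by (simp only: sum.distrib sum_distrib_left)
  also have "\<dots> = f (i, a) + ?\<alpha> * (\<Sum>w\<in>{w \<in> ?V. fst w \<noteq> i}. f w)"
    using v by (simp add: sum.inter_filter Gamma_V_def)
  also have "{w \<in> ?V. fst w \<noteq> i} = ({0..<k} - {i}) \<times> {0..<s}"
    by (auto simp: Gamma_V_def)
  also have "(\<Sum>w\<in>({0..<k} - {i}) \<times> {0..<s}. f w) = (\<Sum>j\<in>{0..<k} - {i}. \<Sum>b<s. f (j, b))"
    by (simp add: sum.cartesian_product lessThan_atLeast0)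
  also have "\<dots> = (\<Sum>j<k. \<Sum>b<s. f (j, b)) - (\<Sum>b<s. f (i, b))"
    using assms(3) by (simp add: sum_diff1 lessThan_atLeast0)
  finally show ?thesis .
qed

lemma lap_eigenvalue_Gamma_cases:
  assumes "c \<ge> 2" "k \<ge> c" and eig: "lap_eigenvalue (Gamma_V s k) (Gamma_E c s k) \<mu>"
  shows "\<mu> = 1 \<or> \<mu> = 1 - (real c - 1) / (real k - 1) \<or> \<mu> = real c"
proof (rule ccontr)
  assume "\<not> ?thesis"
  then have \<mu>: "\<mu> \<noteq> 1" "\<mu> \<noteq> 1 - (real c - 1) / (real k - 1)" "\<mu> \<noteq> real c"
    by auto
  obtain f where f0: "\<exists>v\<in>Gamma_V s k. f v \<noteq> 0" and f_eig:
    "\<And>v. v \<in> Gamma_V s k \<Longrightarrow> (\<Sum>w\<in>Gamma_V s k. norm_lap (Gamma_E c s k) v w * f w) = \<mu> * f v"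
    using eig unfolding lap_eigenvalue_def by blast
  have "s > 0"
    using f0 by (auto simp: Gamma_V_def)
  define \<alpha> where "\<alpha> = (real c - 1) / ((real k - 1) * real s)"
  define \<beta> where "\<beta> = (real c - 1) / (real k - 1)"
  define R where "R i = (\<Sum>b<s. f (i, b))" for i
  define T where "T = (\<Sum>j<k. R j)"
  have s\<alpha>: "real s * \<alpha> = \<beta>"
    using \<open>s > 0\<close> by (simp add: \<alpha>_def \<beta>_def)
  have vertex_eq: "\<mu> * f (i, a) = f (i, a) + \<alpha> * (T - R i)" if "i < k" "a < s" for i a
    using f_eig[of "(i, a)"] norm_lap_Gamma_apply[OF assms(1,2) that, of f] that
    by (simp add: Gamma_V_def R_def T_def \<alpha>_def)
  have class_eq: "\<mu> * R i = R i + \<beta> * (T - R i)" if "i < k" for i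
  proof -
    have "\<mu> * R i = (\<Sum>a<s. f (i, a) + \<alpha> * (T - R i))"
      using vertex_eq[OF that] by (simp add: R_def sum_distrib_left)
    then show ?thesis
      by (simp add: sum.distrib R_def flip: s\<alpha>)
  qed
  have "\<mu> * T = (\<Sum>i<k. R i + \<beta> * (T - R i))"
    using class_eq by (simp add: T_def sum_distrib_left)
  also have "\<dots> = T + ((real k - 1) * \<beta>) * T"
    by (simp add: T_def sum.distrib sum_subtractf flip: sum_distrib_left) (simp add: algebra_simps)
  also have "(real k - 1) * \<beta> = real c - 1"
    using assms(1,2) by (simp add: \<beta>_def)
  finally have "(\<mu> - real c) * T = 0"
    by (simp add: algebra_simps)
  then have "T = 0"
    using \<mu>(3) by simp
  have R0: "R i = 0" if "i < k" for i
  proof -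
    have "(\<mu> - (1 - \<beta>)) * R i = 0"
      using class_eq[OF that] \<open>T = 0\<close> by (simp add: algebra_simps)
    then show ?thesis
      using \<mu>(2) by (simp add: \<beta>_def)
  qed
  have "f v = 0" if vV: "v \<in> Gamma_V s k" for v
  proof -
    obtain i a where v: "v = (i, a)" "i < k" "a < s"
      using vV by (auto simp: Gamma_V_def)
    then have "(\<mu> - 1) * f (i, a) = 0"
      using vertex_eq[OF v(2,3)] \<open>T = 0\<close> R0[OF v(2)] by (simp add: algebra_simps)
    then show ?thesis
      using \<mu>(1) v(1) by simp
  qed
  then show False
    using f0 by blast
qed

lemma lap_eigenvalue_Gamma:
  assumes "c \<ge> 2" "k \<ge> c" "s \<ge> 1"
  shows "lap_eigenvalue (Gamma_V s k) (Gamma_E c s k) (1 - (real c - 1) / (real k - 1))"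
proof -
  let ?\<beta> = "(real c - 1) / (real k - 1)"
  define g :: "nat \<Rightarrow> real" where "g i = (if i = 0 then 1 else if i = 1 then - 1 else 0)" for i
  define f :: "nat \<times> nat \<Rightarrow> real" where "f v = g (fst v)" for v
  have "k > 1"
    using assms by simp
  have g_sum: "(\<Sum>j<k. g j) = 0"
    using \<open>k > 1\<close> by (simp add: g_def sum.If_cases lessThan_def)
  show ?thesis
    unfolding lap_eigenvalue_def
  proof (intro exI conjI ballI)
    show "\<exists>v\<in>Gamma_V s k. f v \<noteq> 0"
      using \<open>k > 1\<close> assms(3) by (intro bexI[of _ "(0, 0)"]) (auto simp: Gamma_V_def f_def g_def)
  next
    fix v assume "v \<in> Gamma_V s k"
    then obtain i a where v: "v = (i, a)" "i < k" "a < s"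
      by (auto simp: Gamma_V_def)
    have "(\<Sum>w\<in>Gamma_V s k. norm_lap (Gamma_E c s k) v w * f w)
          = g i - (real c - 1) / ((real k - 1) * real s) * (real s * g i)"
      using norm_lap_Gamma_apply[OF assms(1,2) v(2,3), of f] v(1)
      by (simp add: f_def g_sum flip: sum_distrib_left)
    also have "\<dots> = (1 - ?\<beta>) * f v"
      using assms(3) \<open>k > 1\<close> v(1) by (simp add: f_def field_simps)
    finally show "(\<Sum>w\<in>Gamma_V s k. norm_lap (Gamma_E c s k) v w * f w) = (1 - ?\<beta>) * f v" .
  qed
qed

lemma smallest_lap_eigenvalue_Gamma:
  assumes "c \<ge> 2" "k \<ge> c" "s \<ge> 1"
  shows "smallest_lap_eigenvalue (Gamma_V s k) (Gamma_E c s k) = 1 - (real c - 1) / (real k - 1)"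
proof -
  define l\<^sub>1 where "l\<^sub>1 = 1 - (real c - 1) / (real k - 1)"
  let ?S = "{\<mu>. lap_eigenvalue (Gamma_V s k) (Gamma_E c s k) \<mu>}"
  have "?S \<subseteq> {1, l\<^sub>1, real c}"
    using lap_eigenvalue_Gamma_cases[OF assms(1,2)] by (auto simp: l\<^sub>1_def)
  moreover have "l\<^sub>1 \<le> 1" "1 \<le> real c"
    using assms by (simp_all add: l\<^sub>1_def)
  ultimately have "Min ?S = l\<^sub>1"
    using lap_eigenvalue_Gamma[OF assms]
    by (intro Min_eqI) (auto simp: l\<^sub>1_def intro: finite_subset)
  then show ?thesis
    by (simp add: smallest_lap_eigenvalue_def l\<^sub>1_def)
qed

lemma strong_coloring_clique_card_le:
  assumes "strong_coloring V E m col" "S \<subseteq> V"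
    and clique: "\<And>v w. v \<in> S \<Longrightarrow> w \<in> S \<Longrightarrow> v \<noteq> w \<Longrightarrow> \<exists>e\<in>E. v \<in> e \<and> w \<in> e"
  shows "card S \<le> m"
proof -
  have "inj_on col S"
    using assms(1) clique unfolding strong_coloring_def by (meson inj_onI)
  moreover have "col ` S \<subseteq> {1..m}"
    using assms(1,2) unfolding strong_coloring_def by auto
  ultimately show ?thesis
    using card_inj_on_le[of col S "{1..m}"] by simp
qed

lemma strong_chromatic_Gamma:
  assumes "c \<ge> 2" "k \<ge> c" "s \<ge> 1"
  shows "strong_chromatic (Gamma_V s k) (Gamma_E c s k) = k"
  unfolding strong_chromatic_def
proof (rule Least_equality)
  show "\<exists>col. strong_coloring (Gamma_V s k) (Gamma_E c s k) k col"
    using Gamma_E_same_class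
    by (intro exI[of _ "\<lambda>v. fst v + 1"]) (fastforce simp: strong_coloring_def Gamma_V_def)
next
  fix m assume "\<exists>col. strong_coloring (Gamma_V s k) (Gamma_E c s k) m col"
  then obtain col where col: "strong_coloring (Gamma_V s k) (Gamma_E c s k) m col" ..
  let ?S = "(\<lambda>i. (i, 0::nat)) ` {0..<k}"
  have "card ?S \<le> m"
  proof (rule strong_coloring_clique_card_le[OF col])
    show "?S \<subseteq> Gamma_V s k"
      using assms(3) by (auto simp: Gamma_V_def)
    then show "\<exists>e\<in>Gamma_E c s k. v \<in> e \<and> w \<in> e" if "v \<in> ?S" "w \<in> ?S" "v \<noteq> w" for v w
      using that assms(1,2) by (intro Gamma_E_edge_through) auto
  qed
  then show "k \<le> m"
    by (simp add: card_image inj_on_def)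
qed

theorem mainTheorem5:
  fixes c s k :: nat
  assumes "c \<ge> 2" and "k \<ge> c" and "s \<ge> 1"
  shows "strong_chromatic (Gamma_V s k) (Gamma_E c s k) = k \<and>
         real k = (real c - smallest_lap_eigenvalue (Gamma_V s k) (Gamma_E c s k))
                  / (1 - smallest_lap_eigenvalue (Gamma_V s k) (Gamma_E c s k))"
proof
  show "strong_chromatic (Gamma_V s k) (Gamma_E c s k) = k"
    using strong_chromatic_Gamma[OF assms] .
  define \<beta> where "\<beta> = (real c - 1) / (real k - 1)"
  have "\<beta> \<noteq> 0" "real c = \<beta> * (real k - 1) + 1"
    using assms by (auto simp: \<beta>_def)
  then show "real k = (real c - smallest_lap_eigenvalue (Gamma_V s k) (Gamma_E c s k))
                  / (1 - smallest_lap_eigenvalue (Gamma_V s k) (Gamma_E c s k))"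
    by (simp add: smallest_lap_eigenvalue_Gamma[OF assms, folded \<beta>_def] field_simps)
qed

end
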